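(* Let $T$ be a square-integrable real random variable and let $X$ and $Y$ be independent random variables (on the same probability space as $T$). Then $L^r_T(X)+L^r_T(Y)=L^r_T(X,Y)$.
   Context: For random variables $Z_1,\dots,Z_k$, the restricted (additive, GAM-type) predictive power of $(Z_1,\dots,Z_k)$ for $T$ is $$L^r_T(Z_1,\dots,Z_k)=\sigma^2(T)-\inf\Bigl\{\sigma^2\Bigl(T-\sum_{i=1}^k f_i(Z_i)\Bigr)\ :\ f_i \text{ measurable},\ E[f_i(Z_i)^2]<\infty\Bigr\},$$ i.e. $\sigma^2(T)-\sigma^2(T-E^r[T\mid Z_1,\dots,Z_k])$ where $E^r[T\mid Z_1,\dots,Z_k]$ is the minimum-variance predictor of $T$ among (the $L^2$-closure of) sums of square-integrable functions of the individual $Z_i$. For a single variable this coincides with $\sigma^2(T)-\sigma^2(T-E[T\mid Z_1])$. $\sigma^2$ denotes variance. *)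

theory Defs
  imports "HOL-Probability.Probability"
begin

definition sq_int_fun :: "'a measure \<Rightarrow> 'b measure \<Rightarrow> ('a \<Rightarrow> 'b) \<Rightarrow> ('b \<Rightarrow> real) \<Rightarrow> bool" where
  "sq_int_fun M N Z f \<longleftrightarrow> f \<in> borel_measurable N \<and> integrable M (\<lambda>\<omega>. (f (Z \<omega>))\<^sup>2)"

definition Lr1 :: "'a measure \<Rightarrow> ('a \<Rightarrow> real) \<Rightarrow> 'b measure \<Rightarrow> ('a \<Rightarrow> 'b) \<Rightarrow> real" where
  "Lr1 M T N Z = prob_space.variance M T -
     (INF f \<in> {f. sq_int_fun M N Z f}. prob_space.variance M (\<lambda>\<omega>. T \<omega> - f (Z \<omega>)))"

definition Lr2 :: "'a measure \<Rightarrow> ('a \<Rightarrow> real) \<Rightarrow> 'b measure \<Rightarrow> ('a \<Rightarrow> 'b) \<Rightarrow> 'c measure \<Rightarrow> ('a \<Rightarrow> 'c) \<Rightarrow> real" where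
  "Lr2 M T N1 Z1 N2 Z2 = prob_space.variance M T -
     (INF fg \<in> {(f, g). sq_int_fun M N1 Z1 f \<and> sq_int_fun M N2 Z2 g}.
        prob_space.variance M (\<lambda>\<omega>. T \<omega> - fst fg (Z1 \<omega>) - snd fg (Z2 \<omega>)))"

text \<open>Independence of two random variables with possibly different codomains
  (the library's indep_var requires a common codomain type):
  P(X in A, Y in B) = P(X in A) P(Y in B) for all measurable A, B.\<close>
definition indep_rv :: "'a measure \<Rightarrow> 'b measure \<Rightarrow> ('a \<Rightarrow> 'b) \<Rightarrow> 'c measure \<Rightarrow> ('a \<Rightarrow> 'c) \<Rightarrow> bool" where
  "indep_rv M N1 X N2 Y \<longleftrightarrow>
     (\<forall>A\<in>sets N1. \<forall>B\<in>sets N2.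
        measure M (X -` A \<inter> Y -` B \<inter> space M) = measure M (X -` A \<inter> space M) * measure M (Y -` B \<inter> space M))"

end

(* Independence of X and Y makes f(X) and g(Y) uncorrelated for all square-integrable f and g,
   so Var(T - f(X) - g(Y)) = Var(T - f(X)) + Var(T - g(Y)) - Var(T).  The infimum over pairs (f, g)
   defining L^r_T(X, Y) therefore splits into the two infima defining L^r_T(X) and L^r_T(Y). *)

theory Submission
  imports Defs
begin

lemma cINF_Times_add:
  fixes f :: "'a \<Rightarrow> 'c::{conditionally_complete_linorder, ordered_ab_group_add}"
    and g :: "'b \<Rightarrow> 'c"
  assumes "A \<noteq> {}" "B \<noteq> {}" and bdd_f: "bdd_below (f ` A)" and bdd_g: "bdd_below (g ` B)"
  shows "(INF p\<in>A \<times> B. f (fst p) + g (snd p)) = (INF x\<in>A. f x) + (INF y\<in>B. g y)"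
    (is "?I = _")
proof (rule antisym)
  have lower: "(INF x\<in>A. f x) + (INF y\<in>B. g y) \<le> f (fst p) + g (snd p)" if "p \<in> A \<times> B" for p
    using that by (intro add_mono cINF_lower bdd_f bdd_g) auto
  then show "(INF x\<in>A. f x) + (INF y\<in>B. g y) \<le> ?I"
    using assms by (intro cINF_greatest) auto
  have bdd: "bdd_below ((\<lambda>p. f (fst p) + g (snd p)) ` (A \<times> B))"
    using lower by (rule bdd_belowI2)
  have "?I - (INF y\<in>B. g y) \<le> f x" if "x \<in> A" for x
  proof -
    have "?I - f x \<le> g y" if "y \<in> B" for y
      using cINF_lower[OF bdd, of "(x, y)"] \<open>x \<in> A\<close> that by (simp add: diff_le_eq add.commute)
    then have "?I - f x \<le> (INF y\<in>B. g y)"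
      using \<open>B \<noteq> {}\<close> by (intro cINF_greatest)
    then show ?thesis
      by (simp add: diff_le_eq add.commute)
  qed
  then have "?I - (INF y\<in>B. g y) \<le> (INF x\<in>A. f x)"
    using \<open>A \<noteq> {}\<close> by (intro cINF_greatest)
  then show "?I \<le> (INF x\<in>A. f x) + (INF y\<in>B. g y)"
    by (simp add: diff_le_eq)
qed

lemma Int_stable_vimage_sets: "Int_stable {X -` A \<inter> S | A. A \<in> sets N}"
proof (rule Int_stableI)
  fix a b assume "a \<in> {X -` A \<inter> S | A. A \<in> sets N}" "b \<in> {X -` A \<inter> S | A. A \<in> sets N}"
  then obtain A B where "a = X -` A \<inter> S" "b = X -` B \<inter> S" "A \<in> sets N" "B \<in> sets N"
    by blast
  then show "a \<inter> b \<in> {X -` A \<inter> S | A. A \<in> sets N}"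
    by (intro CollectI exI[of _ "A \<inter> B"]) auto
qed

lemma vimage_sets_compose_subset:
  assumes X: "X \<in> measurable M N" and f: "f \<in> measurable N K"
  shows "{(\<lambda>\<omega>. f (X \<omega>)) -` A \<inter> space M | A. A \<in> sets K} \<subseteq> {X -` A \<inter> space M | A. A \<in> sets N}"
proof safe
  fix A assume "A \<in> sets K"
  with f have "f -` A \<inter> space N \<in> sets N"
    by (rule measurable_sets)
  moreover have "(\<lambda>\<omega>. f (X \<omega>)) -` A \<inter> space M = X -` (f -` A \<inter> space N) \<inter> space M"
    using X by (auto simp: measurable_space)
  ultimately show "\<exists>B. (\<lambda>\<omega>. f (X \<omega>)) -` A \<inter> space M = X -` B \<inter> space M \<and> B \<in> sets N"
    by blast
qed

lemma integrable_mult_of_square_integrable: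
  fixes f g :: "'a \<Rightarrow> real"
  assumes [measurable]: "f \<in> borel_measurable M" "g \<in> borel_measurable M"
    and "integrable M (\<lambda>x. (f x)\<^sup>2)" "integrable M (\<lambda>x. (g x)\<^sup>2)"
  shows "integrable M (\<lambda>x. f x * g x)"
proof (rule Bochner_Integration.integrable_bound)
  show "integrable M (\<lambda>x. (f x)\<^sup>2 + (g x)\<^sup>2)"
    using assms by simp
  have "\<bar>f x * g x\<bar> \<le> (f x)\<^sup>2 + (g x)\<^sup>2" for x
  proof -
    have "2 * \<bar>f x\<bar> * \<bar>g x\<bar> \<le> (f x)\<^sup>2 + (g x)\<^sup>2"
      using sum_squares_bound[of "\<bar>f x\<bar>" "\<bar>g x\<bar>"] by simp
    moreover have "0 \<le> \<bar>f x\<bar> * \<bar>g x\<bar>"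
      by simp
    ultimately show ?thesis
      unfolding abs_mult by linarith
  qed
  then show "AE x in M. norm (f x * g x) \<le> norm ((f x)\<^sup>2 + (g x)\<^sup>2)"
    by simp
qed simp

context prob_space
begin

lemma variance_diff_diff_uncorrelated:
  fixes T F G :: "'a \<Rightarrow> real"
  assumes [measurable]: "T \<in> borel_measurable M" "F \<in> borel_measurable M" "G \<in> borel_measurable M"
    and [simp]: "integrable M (\<lambda>x. (T x)\<^sup>2)" "integrable M (\<lambda>x. (F x)\<^sup>2)" "integrable M (\<lambda>x. (G x)\<^sup>2)"
    and uncorrelated: "expectation (\<lambda>x. F x * G x) = expectation F * expectation G"
  shows "variance (\<lambda>x. T x - F x - G x) =
    variance (\<lambda>x. T x - F x) + variance (\<lambda>x. T x - G x) - variance T"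
proof -
  have [simp]: "integrable M T" "integrable M F" "integrable M G"
    by (simp_all add: square_integrable_imp_integrable)
  have [simp]: "integrable M (\<lambda>x. T x * F x)" "integrable M (\<lambda>x. T x * G x)"
    "integrable M (\<lambda>x. F x * G x)"
    by (simp_all add: integrable_mult_of_square_integrable)
  have sq3: "(T x - F x - G x)\<^sup>2 = (T x)\<^sup>2 + (F x)\<^sup>2 + (G x)\<^sup>2
      - 2 * (T x * F x) - 2 * (T x * G x) + 2 * (F x * G x)" for x
    by (simp add: power2_eq_square algebra_simps)
  have sq2: "(T x - H x)\<^sup>2 = (T x)\<^sup>2 + (H x)\<^sup>2 - 2 * (T x * H x)" for x and H :: "'a \<Rightarrow> real"
    by (simp add: power2_eq_square algebra_simps)
  have [simp]: "integrable M (\<lambda>x. (T x - F x - G x)\<^sup>2)" "integrable M (\<lambda>x. (T x - F x)\<^sup>2)"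
    "integrable M (\<lambda>x. (T x - G x)\<^sup>2)"
    by (simp_all add: sq3 sq2)
  have var:
    "variance (\<lambda>x. T x - F x - G x) =
      expectation (\<lambda>x. (T x - F x - G x)\<^sup>2) - (expectation (\<lambda>x. T x - F x - G x))\<^sup>2"
    "variance (\<lambda>x. T x - F x) = expectation (\<lambda>x. (T x - F x)\<^sup>2) - (expectation (\<lambda>x. T x - F x))\<^sup>2"
    "variance (\<lambda>x. T x - G x) = expectation (\<lambda>x. (T x - G x)\<^sup>2) - (expectation (\<lambda>x. T x - G x))\<^sup>2"
    "variance T = expectation (\<lambda>x. (T x)\<^sup>2) - (expectation T)\<^sup>2"
    by (rule variance_eq; simp)+
  show ?thesis
    unfolding var sq3 sq2 by (simp add: uncorrelated) (simp add: power2_eq_square algebra_simps)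
qed

lemma indep_set_of_indep_rv:
  assumes indep: "indep_rv M N1 X N2 Y" and X: "X \<in> measurable M N1" and Y: "Y \<in> measurable M N2"
  shows "indep_set {X -` A \<inter> space M | A. A \<in> sets N1} {Y -` B \<inter> space M | B. B \<in> sets N2}"
proof (rule indep_setI)
  fix a b assume "a \<in> {X -` A \<inter> space M | A. A \<in> sets N1}" "b \<in> {Y -` B \<inter> space M | B. B \<in> sets N2}"
  then obtain A B where "a = X -` A \<inter> space M" "b = Y -` B \<inter> space M" "A \<in> sets N1" "B \<in> sets N2"
    by blast
  moreover from this have "a \<inter> b = X -` A \<inter> Y -` B \<inter> space M"
    by blast
  ultimately show "prob (a \<inter> b) = prob a * prob b"
    using indep by (simp add: indep_rv_def)
qed (use X Y in \<open>auto intro: measurable_sets\<close>)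

lemma indep_var_compose_of_indep_rv:
  assumes "indep_rv M N1 X N2 Y" and X: "X \<in> measurable M N1" and Y: "Y \<in> measurable M N2"
    and f: "f \<in> measurable N1 K1" and g: "g \<in> measurable N2 K2"
  shows "indep_var K1 (\<lambda>\<omega>. f (X \<omega>)) K2 (\<lambda>\<omega>. g (Y \<omega>))"
proof -
  let ?GX = "{X -` A \<inter> space M | A. A \<in> sets N1}" and ?GY = "{Y -` B \<inter> space M | B. B \<in> sets N2}"
  have "indep_set (sigma_sets (space M) ?GX) (sigma_sets (space M) ?GY)"
    using assms by (intro indep_set_sigma_sets indep_set_of_indep_rv Int_stable_vimage_sets)
  then have "indep_set (sigma_sets (space M) {(\<lambda>\<omega>. f (X \<omega>)) -` A \<inter> space M | A. A \<in> sets K1})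
    (sigma_sets (space M) {(\<lambda>\<omega>. g (Y \<omega>)) -` B \<inter> space M | B. B \<in> sets K2})"
    using sigma_sets_subseteq[OF vimage_sets_compose_subset[OF X f]]
      sigma_sets_subseteq[OF vimage_sets_compose_subset[OF Y g]]
    unfolding indep_set_def by (elim indep_sets_mono_sets) (simp split: bool.split)
  then show ?thesis
    using X Y f g by (simp add: indep_var_eq)
qed

lemma variance_diff_diff_indep_rv:
  fixes T :: "'a \<Rightarrow> real"
  assumes "T \<in> borel_measurable M" "integrable M (\<lambda>\<omega>. (T \<omega>)\<^sup>2)"
    and X: "X \<in> measurable M N1" and Y: "Y \<in> measurable M N2" and indep: "indep_rv M N1 X N2 Y"
    and "sq_int_fun M N1 X f" "sq_int_fun M N2 Y g"
  shows "variance (\<lambda>\<omega>. T \<omega> - f (X \<omega>) - g (Y \<omega>)) =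
    variance (\<lambda>\<omega>. T \<omega> - f (X \<omega>)) + variance (\<lambda>\<omega>. T \<omega> - g (Y \<omega>)) - variance T"
proof -
  from assms have f: "f \<in> borel_measurable N1" "integrable M (\<lambda>\<omega>. (f (X \<omega>))\<^sup>2)"
    and g: "g \<in> borel_measurable N2" "integrable M (\<lambda>\<omega>. (g (Y \<omega>))\<^sup>2)"
    by (simp_all add: sq_int_fun_def)
  have fX: "(\<lambda>\<omega>. f (X \<omega>)) \<in> borel_measurable M" and gY: "(\<lambda>\<omega>. g (Y \<omega>)) \<in> borel_measurable M"
    using measurable_compose[OF X f(1)] measurable_compose[OF Y g(1)] by simp_all
  have "expectation (\<lambda>\<omega>. f (X \<omega>) * g (Y \<omega>)) =
      expectation (\<lambda>\<omega>. f (X \<omega>)) * expectation (\<lambda>\<omega>. g (Y \<omega>))"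
    by (rule indep_var_lebesgue_integral[OF indep_var_compose_of_indep_rv[OF indep X Y f(1) g(1)]
          square_integrable_imp_integrable[OF fX f(2)] square_integrable_imp_integrable[OF gY g(2)]])
  then show ?thesis
    by (rule variance_diff_diff_uncorrelated[OF assms(1) fX gY assms(2) f(2) g(2)])
qed

end

theorem theorem1:
  fixes M :: "'a measure" and T :: "'a \<Rightarrow> real"
    and N1 :: "'b measure" and X :: "'a \<Rightarrow> 'b"
    and N2 :: "'c measure" and Y :: "'a \<Rightarrow> 'c"
  assumes "prob_space M"
    and "T \<in> borel_measurable M" and "integrable M (\<lambda>\<omega>. (T \<omega>)\<^sup>2)"
    and "X \<in> measurable M N1" and "Y \<in> measurable M N2"
    and "indep_rv M N1 X N2 Y"
  shows "Lr1 M T N1 X + Lr1 M T N2 Y = Lr2 M T N1 X N2 Y"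
proof -
  interpret prob_space M by fact
  let ?S1 = "{f. sq_int_fun M N1 X f}" and ?S2 = "{g. sq_int_fun M N2 Y g}"
  let ?v1 = "\<lambda>f. variance (\<lambda>\<omega>. T \<omega> - f (X \<omega>))"
    and ?v2 = "\<lambda>g. variance (\<lambda>\<omega>. T \<omega> - g (Y \<omega>))"
  have nonempty: "?S1 \<noteq> {}" "?S2 \<noteq> {}"
    by (auto simp: sq_int_fun_def intro!: exI[of _ "\<lambda>_. 0"])
  have bdd: "bdd_below (?v1 ` ?S1)" "bdd_below (?v2 ` ?S2)"
    "bdd_below ((\<lambda>p. ?v1 (fst p) + ?v2 (snd p)) ` (?S1 \<times> ?S2))"
    by (auto intro!: bdd_belowI[of _ 0] variance_positive add_nonneg_nonneg)
  have "{(f, g). sq_int_fun M N1 X f \<and> sq_int_fun M N2 Y g} = ?S1 \<times> ?S2"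
    by auto
  then have "Lr2 M T N1 X N2 Y =
      variance T - (INF p\<in>?S1 \<times> ?S2. - variance T + (?v1 (fst p) + ?v2 (snd p)))"
    unfolding Lr2_def using assms(2-)
    by (intro arg_cong2[where f = minus] INF_cong) (auto simp: variance_diff_diff_indep_rv)
  also have "\<dots> = variance T - (- variance T + (INF p\<in>?S1 \<times> ?S2. ?v1 (fst p) + ?v2 (snd p)))"
    using nonempty by (subst Inf_add_eq[OF bdd(3)]) auto
  also have "\<dots> = variance T - (- variance T + ((INF f\<in>?S1. ?v1 f) + (INF g\<in>?S2. ?v2 g)))"
    unfolding cINF_Times_add[OF nonempty bdd(1,2)] ..
  finally show ?thesis
    unfolding Lr1_def by simp
qed

end
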